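(* Let $T$ be a $\delta$-Jordan Lie supertriple system, $\psi:T\times T\times T\to T$ an even trilinear map, and for a formal variable $\lambda$ let $T_\lambda$ denote $T$ with the product $[x_1,x_2,x_3]_\lambda=[x_1,x_2,x_3]+\lambda\psi(x_1,x_2,x_3)$. Then $T_\lambda$ is a $\delta$-Jordan Lie supertriple system if and only if (i) $\psi$ itself defines a $\delta$-Jordan Lie supertriple system structure on $T$, and (ii) $\psi$ is a 3-cocycle of $T$, i.e. $d^3\psi=0$.
   Context: A $\delta$-Jordan Lie supertriple system ($\delta\in\{1,-1\}$) is a $\mathbb{Z}_2$-graded vector space $T$ with a trilinear product $[\cdot,\cdot,\cdot]$ such that, for all homogeneous $a,b,c,d,e$ (with $|a|$ the degree of $a$): $|[a,b,c]|=|a|+|b|+|c|$; $[b,a,c]=-\delta(-1)^{|a||b|}[a,b,c]$; $(-1)^{|a||c|}[a,b,c]+(-1)^{|b||a|}[b,c,a]+(-1)^{|c||b|}[c,a,b]=0$; and $[a,b,[c,d,e]]=[[a,b,c],d,e]+(-1)^{|c|(|a|+|b|)}[c,[a,b,d],e]+\delta(-1)^{(|a|+|b|)(|c|+|d|)}[c,d,[a,b,e]]$. "$T_\lambda$ is a $\delta$-Jordan Lie supertriple system" means these identities hold for $[\cdot,\cdot,\cdot]_\lambda$ identically in $\lambda$. With the adjoint representation $\theta(a,b)(x)=(-1)^{|x|(|a|+|b|)}[x,a,b]$, $D(a,b)(x)=\delta[a,b,x]$, and for a trilinear map $f$ of degree $|f|$ (here $|\psi|=0$): $d^{3}f(x_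1,\dots,x_5)=(-1)^{(|f|+|x_1|+|x_2|+|x_3|)(|x_4|+|x_5|)}\theta(x_4,x_5)f(x_1,x_2,x_3)-\delta(-1)^{(|f|+|x_1|+|x_2|)(|x_3|+|x_5|)+|x_4||x_5|}\theta(x_3,x_5)f(x_1,x_2,x_4)-\delta(-1)^{|f|(|x_1|+|x_2|)}D(x_1,x_2)f(x_3,x_4,x_5)+(-1)^{(|f|+|x_1|+|x_2|)(|x_3|+|x_4|)}D(x_3,x_4)f(x_1,x_2,x_5)+f([x_1,x_2,x_3],x_4,x_5)-f(x_1,x_2,[x_3,x_4,x_5])+(-1)^{|x_3|(|x_1|+|x_2|)}f(x_3,[x_1,x_2,x_4],x_5)+\delta(-1)^{(|x_1|+|x_2|)(|x_3|+|x_4|)}f(x_3,x_4,[x_1,x_2,x_5])$ for homogeneous $x_i$. *)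

theory Defs
  imports Complex_Main "HOL-Library.Function_Algebras"
begin

text \<open>Degrees of homogeneous elements are the naturals 0 and 1.\<close>

definition lsubspace :: "('k::field \<Rightarrow> 'v::ab_group_add \<Rightarrow> 'v) \<Rightarrow> 'v set \<Rightarrow> bool" where
  "lsubspace sm S \<longleftrightarrow> 0 \<in> S \<and> (\<forall>x\<in>S. \<forall>y\<in>S. x + y \<in> S) \<and> (\<forall>c. \<forall>x\<in>S. sm c x \<in> S)"

definition graded_vs :: "('k::field \<Rightarrow> 'v::ab_group_add \<Rightarrow> 'v) \<Rightarrow> 'v set \<Rightarrow> 'v set \<Rightarrow> bool" where
  "graded_vs sm V0 V1 \<longleftrightarrow> vector_space sm \<and> lsubspace sm V0 \<and> lsubspace sm V1 \<and>
     (\<forall>x. \<exists>!p. fst p \<in> V0 \<and> snd p \<in> V1 \<and> x = fst p + snd p)"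

definition hom :: "'v set \<Rightarrow> 'v set \<Rightarrow> 'v \<Rightarrow> nat \<Rightarrow> bool" where
  "hom V0 V1 x i \<longleftrightarrow> (i = 0 \<and> x \<in> V0) \<or> (i = 1 \<and> x \<in> V1)"

definition sgn1 :: "nat \<Rightarrow> 'k::field" where
  "sgn1 n = (-1) ^ n"

definition trilinear :: "('k::field \<Rightarrow> 'v::ab_group_add \<Rightarrow> 'v) \<Rightarrow> ('v \<Rightarrow> 'v \<Rightarrow> 'v \<Rightarrow> 'v) \<Rightarrow> bool" where
  "trilinear sm f \<longleftrightarrow> (\<forall>a b c.
      Vector_Spaces.linear sm sm (\<lambda>x. f x b c) \<and>
      Vector_Spaces.linear sm sm (\<lambda>x. f a x c) \<and>
      Vector_Spaces.linear sm sm (\<lambda>x. f a b x))"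

definition graded_map :: "'v set \<Rightarrow> 'v set \<Rightarrow> nat \<Rightarrow> ('v \<Rightarrow> 'v \<Rightarrow> 'v \<Rightarrow> 'v) \<Rightarrow> bool" where
  "graded_map V0 V1 fd f \<longleftrightarrow> (\<forall>a b c i j k. hom V0 V1 a i \<longrightarrow> hom V0 V1 b j \<longrightarrow> hom V0 V1 c k \<longrightarrow>
      hom V0 V1 (f a b c) ((fd + i + j + k) mod 2))"

definition JLSTS :: "('k::field \<Rightarrow> 'v::ab_group_add \<Rightarrow> 'v) \<Rightarrow> 'v set \<Rightarrow> 'v set \<Rightarrow> 'k
    \<Rightarrow> ('v \<Rightarrow> 'v \<Rightarrow> 'v \<Rightarrow> 'v) \<Rightarrow> bool" where
  "JLSTS sm V0 V1 \<delta> br \<longleftrightarrow> (\<delta> = 1 \<or> \<delta> = -1) \<and> trilinear sm br \<and> graded_map V0 V1 0 br \<and>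
    (\<forall>a b c d e i j k l m.
       hom V0 V1 a i \<longrightarrow> hom V0 V1 b j \<longrightarrow> hom V0 V1 c k \<longrightarrow> hom V0 V1 d l \<longrightarrow> hom V0 V1 e m \<longrightarrow>
       br b a c = sm (- \<delta> * sgn1 (i * j)) (br a b c) \<and>
       sm (sgn1 (i * k)) (br a b c) + sm (sgn1 (j * i)) (br b c a) + sm (sgn1 (k * j)) (br c a b) = 0 \<and>
       br a b (br c d e) = br (br a b c) d e + sm (sgn1 (k * (i + j))) (br c (br a b d) e)
                            + sm (\<delta> * sgn1 ((i + j) * (k + l))) (br c d (br a b e)))"

definition theta :: "('k::field \<Rightarrow> 'v::ab_group_add \<Rightarrow> 'v) \<Rightarrow> ('v \<Rightarrow> 'v \<Rightarrow> 'v \<Rightarrow> 'v)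
    \<Rightarrow> 'v \<Rightarrow> nat \<Rightarrow> 'v \<Rightarrow> nat \<Rightarrow> 'v \<Rightarrow> nat \<Rightarrow> 'v" where
  "theta sm br a na b nb x nx = sm (sgn1 (nx * (na + nb))) (br x a b)"

definition Dop :: "('k::field \<Rightarrow> 'v::ab_group_add \<Rightarrow> 'v) \<Rightarrow> 'k \<Rightarrow> ('v \<Rightarrow> 'v \<Rightarrow> 'v \<Rightarrow> 'v)
    \<Rightarrow> 'v \<Rightarrow> 'v \<Rightarrow> 'v \<Rightarrow> 'v" where
  "Dop sm \<delta> br a b x = sm \<delta> (br a b x)"

definition d3 :: "('k::field \<Rightarrow> 'v::ab_group_add \<Rightarrow> 'v) \<Rightarrow> 'k \<Rightarrow> ('v \<Rightarrow> 'v \<Rightarrow> 'v \<Rightarrow> 'v)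
    \<Rightarrow> ('v \<Rightarrow> 'v \<Rightarrow> 'v \<Rightarrow> 'v) \<Rightarrow> nat
    \<Rightarrow> 'v \<Rightarrow> nat \<Rightarrow> 'v \<Rightarrow> nat \<Rightarrow> 'v \<Rightarrow> nat \<Rightarrow> 'v \<Rightarrow> nat \<Rightarrow> 'v \<Rightarrow> nat \<Rightarrow> 'v" where
  "d3 sm \<delta> br f fd x1 n1 x2 n2 x3 n3 x4 n4 x5 n5 =
     sm (sgn1 ((fd + n1 + n2 + n3) * (n4 + n5)))
        (theta sm br x4 n4 x5 n5 (f x1 x2 x3) (fd + n1 + n2 + n3))
   - sm (\<delta> * sgn1 ((fd + n1 + n2) * (n3 + n5) + n4 * n5))
        (theta sm br x3 n3 x5 n5 (f x1 x2 x4) (fd + n1 + n2 + n4))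
   - sm (\<delta> * sgn1 (fd * (n1 + n2))) (Dop sm \<delta> br x1 x2 (f x3 x4 x5))
   + sm (sgn1 ((fd + n1 + n2) * (n3 + n4))) (Dop sm \<delta> br x3 x4 (f x1 x2 x5))
   + f (br x1 x2 x3) x4 x5
   - f x1 x2 (br x3 x4 x5)
   + sm (sgn1 (n3 * (n1 + n2))) (f x3 (br x1 x2 x4) x5)
   + sm (\<delta> * sgn1 ((n1 + n2) * (n3 + n4))) (f x3 x4 (br x1 x2 x5))"

definition cocycle3 :: "('k::field \<Rightarrow> 'v::ab_group_add \<Rightarrow> 'v) \<Rightarrow> 'v set \<Rightarrow> 'v set \<Rightarrow> 'k
    \<Rightarrow> ('v \<Rightarrow> 'v \<Rightarrow> 'v \<Rightarrow> 'v) \<Rightarrow> ('v \<Rightarrow> 'v \<Rightarrow> 'v \<Rightarrow> 'v) \<Rightarrow> nat \<Rightarrow> bool" where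
  "cocycle3 sm V0 V1 \<delta> br f fd \<longleftrightarrow> (\<forall>x1 n1 x2 n2 x3 n3 x4 n4 x5 n5.
     hom V0 V1 x1 n1 \<longrightarrow> hom V0 V1 x2 n2 \<longrightarrow> hom V0 V1 x3 n3 \<longrightarrow> hom V0 V1 x4 n4 \<longrightarrow> hom V0 V1 x5 n5 \<longrightarrow>
     d3 sm \<delta> br f fd x1 n1 x2 n2 x3 n3 x4 n4 x5 n5 = 0)"

text \<open>Formal variable lambda: T_lambda is realised on T[[lambda]], modelled as sequences
  nat => 'v of coefficients, with coefficientwise scalar multiplication and grading, and the
  product extended lambda-trilinearly: [P,Q,R]_lambda = [P,Q,R] + lambda psi(P,Q,R).
  An identity holds "identically in lambda" iff it holds in T[[lambda]].\<close>

definition ext_sm :: "('k \<Rightarrow> 'v \<Rightarrow> 'v) \<Rightarrow> 'k \<Rightarrow> (nat \<Rightarrow> 'v) \<Rightarrow> (nat \<Rightarrow> 'v)" where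
  "ext_sm sm c P = (\<lambda>n. sm c (P n))"

definition extV :: "'v set \<Rightarrow> (nat \<Rightarrow> 'v) set" where
  "extV V = {P. \<forall>n. P n \<in> V}"

definition conv3 :: "('v::comm_monoid_add \<Rightarrow> 'v \<Rightarrow> 'v \<Rightarrow> 'v) \<Rightarrow> (nat \<Rightarrow> 'v) \<Rightarrow> (nat \<Rightarrow> 'v) \<Rightarrow> (nat \<Rightarrow> 'v) \<Rightarrow> nat \<Rightarrow> 'v" where
  "conv3 f P Q R n = (\<Sum>i\<le>n. \<Sum>j\<le>n - i. f (P i) (Q j) (R (n - i - j)))"

definition lam_br :: "('v::comm_monoid_add \<Rightarrow> 'v \<Rightarrow> 'v \<Rightarrow> 'v) \<Rightarrow> ('v \<Rightarrow> 'v \<Rightarrow> 'v \<Rightarrow> 'v)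
    \<Rightarrow> (nat \<Rightarrow> 'v) \<Rightarrow> (nat \<Rightarrow> 'v) \<Rightarrow> (nat \<Rightarrow> 'v) \<Rightarrow> (nat \<Rightarrow> 'v)" where
  "lam_br br psi P Q R = (\<lambda>n. conv3 br P Q R n + (if n = 0 then 0 else conv3 psi P Q R (n - 1)))"

end

theory Submission
  imports Defs
begin

(* Each defining
  identity of a \<delta>-Jordan Lie supertriple system says that a defect vanishes. Skew-symmetry
  and the cyclic identity are linear in the product, so their defects for the deformed product
  are those of [,] plus \<lambda> times those of \<psi>. The fundamental identity is quadratic: the
  coefficients of its defect at \<lambda>^0, \<lambda>^1, \<lambda>^2 are the defect of [,], the sum of the two
  mixed defects of [,] and \<psi>, and the defect of \<psi>. As [,] satisfies the identities, the
  deformed product does iff \<psi> does and the mixed defects cancel, and after one use of the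
  skew-symmetry of [,] the mixed sum is exactly -d^3 \<psi>. Conversely, the identities for \<psi>
  and the cocycle condition are read off from the coefficients of \<lambda> and \<lambda>^2 at constant
  series. *)

section \<open>Cauchy products of power series\<close>

definition compositions3 :: "nat \<Rightarrow> (nat \<times> nat \<times> nat) set" where
  "compositions3 n = {(i, j, k). i + j + k = n}"

definition compositions5 :: "nat \<Rightarrow> (nat \<times> nat \<times> nat \<times> nat \<times> nat) set" where
  "compositions5 n = {(a, b, c, d, e). a + b + c + d + e = n}"

lemma finite_compositions3 [simp]: "finite (compositions3 n)"
  by (rule finite_subset[of _ "{..n} \<times> {..n} \<times> {..n}"]) (auto simp: compositions3_def)

lemma finite_compositions5 [simp]: "finite (compositions5 n)"
  by (rule finite_subset[of _ "{..n} \<times> {..n} \<times> {..n} \<times> {..n} \<times> {..n}"])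
     (auto simp: compositions5_def)

lemma conv3_eq_sum_compositions3:
  "conv3 f P Q R n = (\<Sum>(i, j, k)\<in>compositions3 n. f (P i) (Q j) (R k))"
proof -
  have "conv3 f P Q R n = (\<Sum>(i, j)\<in>Sigma {..n} (\<lambda>i. {..n - i}). f (P i) (Q j) (R (n - i - j)))"
    unfolding conv3_def by (subst sum.Sigma) auto
  also have "\<dots> = (\<Sum>(i, j, k)\<in>compositions3 n. f (P i) (Q j) (R k))"
    by (rule sum.reindex_bij_witness[where i = "\<lambda>(i, j, k). (i, j)" and j = "\<lambda>(i, j). (i, j, n - i - j)"])
       (auto simp: compositions3_def)
  finally show ?thesis .
qed

lemma conv3_swap12: "conv3 f Q P R = conv3 (\<lambda>x y z. f y x z) P Q R"
  unfolding conv3_eq_sum_compositions3 fun_eq_iff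
  by (intro allI sum.reindex_bij_witness[where i = "\<lambda>(i, j, k). (j, i, k)" and j = "\<lambda>(i, j, k). (j, i, k)"])
     (auto simp: compositions3_def)

lemma conv3_rotate: "conv3 f Q R P = conv3 (\<lambda>x y z. f y z x) P Q R"
  unfolding conv3_eq_sum_compositions3 fun_eq_iff
  by (intro allI sum.reindex_bij_witness[where i = "\<lambda>(i, j, k). (j, k, i)" and j = "\<lambda>(i, j, k). (k, i, j)"])
     (auto simp: compositions3_def)

lemma conv3_add_kernel:
  "conv3 (\<lambda>x y z. f x y z + g x y z) P Q R = conv3 f P Q R + conv3 g P Q R"
  by (simp add: fun_eq_iff conv3_def sum.distrib)

lemma conv3_diff_kernel:
  fixes f g :: "'v::ab_group_add \<Rightarrow> 'v \<Rightarrow> 'v \<Rightarrow> 'v"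
  shows "conv3 (\<lambda>x y z. f x y z - g x y z) P Q R = conv3 f P Q R - conv3 g P Q R"
  by (simp add: fun_eq_iff conv3_def sum_subtractf)

lemma conv3_eq_0: "(\<And>a b c. f (P a) (Q b) (R c) = 0) \<Longrightarrow> conv3 f P Q R = 0"
  by (simp add: fun_eq_iff conv3_def)

definition conv5 :: "('v::comm_monoid_add \<Rightarrow> 'v \<Rightarrow> 'v \<Rightarrow> 'v \<Rightarrow> 'v \<Rightarrow> 'v) \<Rightarrow> (nat \<Rightarrow> 'v)
    \<Rightarrow> (nat \<Rightarrow> 'v) \<Rightarrow> (nat \<Rightarrow> 'v) \<Rightarrow> (nat \<Rightarrow> 'v) \<Rightarrow> (nat \<Rightarrow> 'v) \<Rightarrow> nat \<Rightarrow> 'v" where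
  "conv5 h P Q R S U n = (\<Sum>(a, b, c, d, e)\<in>compositions5 n. h (P a) (Q b) (R c) (S d) (U e))"

lemma conv5_add_kernel:
  "conv5 (\<lambda>a b c d e. g a b c d e + h a b c d e) P Q R S U = conv5 g P Q R S U + conv5 h P Q R S U"
  by (simp add: fun_eq_iff conv5_def sum.distrib case_prod_beta)

lemma conv5_diff_kernel:
  fixes g h :: "'v::ab_group_add \<Rightarrow> 'v \<Rightarrow> 'v \<Rightarrow> 'v \<Rightarrow> 'v \<Rightarrow> 'v"
  shows "conv5 (\<lambda>a b c d e. g a b c d e - h a b c d e) P Q R S U = conv5 g P Q R S U - conv5 h P Q R S U"
  by (simp add: fun_eq_iff conv5_def sum_subtractf case_prod_beta)

lemma conv5_eq_0: "(\<And>a b c d e. h (P a) (Q b) (R c) (S d) (U e) = 0) \<Longrightarrow> conv5 h P Q R S U = 0"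
  by (simp add: fun_eq_iff conv5_def case_prod_beta)

definition triadditive ::
    "('a::ab_group_add \<Rightarrow> 'b::ab_group_add \<Rightarrow> 'c::ab_group_add \<Rightarrow> 'd::ab_group_add) \<Rightarrow> bool" where
  "triadditive f \<longleftrightarrow>
     (\<forall>a b c. additive (\<lambda>x. f x b c) \<and> additive (\<lambda>x. f a x c) \<and> additive (\<lambda>x. f a b x))"

lemma triadditiveD:
  assumes "triadditive f"
  shows "additive (\<lambda>x. f x b c)" "additive (\<lambda>x. f a x c)" "additive (\<lambda>x. f a b x)"
  using assms by (simp_all add: triadditive_def)

lemma triadditive_zero [simp]:
  assumes "triadditive f"
  shows "f 0 b c = 0" "f a 0 c = 0" "f a b 0 = 0"
  using additive.zero[OF triadditiveD(1)[OF assms]] additive.zero[OF triadditiveD(2)[OF assms]]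
    additive.zero[OF triadditiveD(3)[OF assms]] by simp_all

lemma conv3_add:
  assumes "triadditive f"
  shows "conv3 f (A + B) Q R = conv3 f A Q R + conv3 f B Q R"
    "conv3 f P (A + B) R = conv3 f P A R + conv3 f P B R"
    "conv3 f P Q (A + B) = conv3 f P Q A + conv3 f P Q B"
  using additive.add[OF triadditiveD(1)[OF assms]] additive.add[OF triadditiveD(2)[OF assms]]
    additive.add[OF triadditiveD(3)[OF assms]]
  by (simp_all add: conv3_def sum.distrib fun_eq_iff)

lemma conv3_conv3_left:
  assumes "triadditive f"
  shows "conv3 f (conv3 g P Q R) S U = conv5 (\<lambda>a b c d e. f (g a b c) d e) P Q R S U"
proof
  fix n
  have "conv3 f (conv3 g P Q R) S U n =
      (\<Sum>((i, j, k), (a, b, c))\<in>Sigma (compositions3 n) (\<lambda>(i, j, k). compositions3 i).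
        f (g (P a) (Q b) (R c)) (S j) (U k))"
    by (simp add: conv3_eq_sum_compositions3 additive.sum[OF triadditiveD(1)[OF assms]] sum.Sigma split_def)
  also have "\<dots> = conv5 (\<lambda>a b c d e. f (g a b c) d e) P Q R S U n"
    unfolding conv5_def
    by (rule sum.reindex_bij_witness[where i = "\<lambda>(a, b, c, d, e). ((a + b + c, d, e), (a, b, c))"
          and j = "\<lambda>((i, j, k), (a, b, c)). (a, b, c, j, k)"]) (auto simp: compositions3_def compositions5_def)
  finally show "conv3 f (conv3 g P Q R) S U n = conv5 (\<lambda>a b c d e. f (g a b c) d e) P Q R S U n" .
qed

lemma conv3_conv3_middle:
  assumes "triadditive f"
  shows "conv3 f R (conv3 g P Q S) U = conv5 (\<lambda>a b c d e. f c (g a b d) e) P Q R S U"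
proof
  fix n
  have "conv3 f R (conv3 g P Q S) U n =
      (\<Sum>((i, j, k), (a, b, c))\<in>Sigma (compositions3 n) (\<lambda>(i, j, k). compositions3 j).
        f (R i) (g (P a) (Q b) (S c)) (U k))"
    by (simp add: conv3_eq_sum_compositions3 additive.sum[OF triadditiveD(2)[OF assms]] sum.Sigma split_def)
  also have "\<dots> = conv5 (\<lambda>a b c d e. f c (g a b d) e) P Q R S U n"
    unfolding conv5_def
    by (rule sum.reindex_bij_witness[where i = "\<lambda>(a, b, c, d, e). ((c, a + b + d, e), (a, b, d))"
          and j = "\<lambda>((i, j, k), (a, b, c)). (a, b, i, c, k)"]) (auto simp: compositions3_def compositions5_def)
  finally show "conv3 f R (conv3 g P Q S) U n = conv5 (\<lambda>a b c d e. f c (g a b d) e) P Q R S U n" .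
qed

lemma conv3_conv3_right:
  assumes "triadditive f"
  shows "conv3 f P Q (conv3 g R S U) = conv5 (\<lambda>a b c d e. f a b (g c d e)) P Q R S U"
proof
  fix n
  have "conv3 f P Q (conv3 g R S U) n =
      (\<Sum>((i, j, k), (a, b, c))\<in>Sigma (compositions3 n) (\<lambda>(i, j, k). compositions3 k).
        f (P i) (Q j) (g (R a) (S b) (U c)))"
    by (simp add: conv3_eq_sum_compositions3 additive.sum[OF triadditiveD(3)[OF assms]] sum.Sigma split_def)
  also have "\<dots> = conv5 (\<lambda>a b c d e. f a b (g c d e)) P Q R S U n"
    unfolding conv5_def
    by (rule sum.reindex_bij_witness[where i = "\<lambda>(a, b, c, d, e). ((a, b, c + d + e), (c, d, e))"
          and j = "\<lambda>((i, j, k), (a, b, c)). (i, j, a, b, c)"]) (auto simp: compositions3_def compositions5_def)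
  finally show "conv3 f P Q (conv3 g R S U) n = conv5 (\<lambda>a b c d e. f a b (g c d e)) P Q R S U n" .
qed

lemma conv3_conv3_right':
  assumes "triadditive f"
  shows "conv3 f R S (conv3 g P Q U) = conv5 (\<lambda>a b c d e. f c d (g a b e)) P Q R S U"
proof
  fix n
  have "conv3 f R S (conv3 g P Q U) n =
      (\<Sum>((i, j, k), (a, b, c))\<in>Sigma (compositions3 n) (\<lambda>(i, j, k). compositions3 k).
        f (R i) (S j) (g (P a) (Q b) (U c)))"
    by (simp add: conv3_eq_sum_compositions3 additive.sum[OF triadditiveD(3)[OF assms]] sum.Sigma split_def)
  also have "\<dots> = conv5 (\<lambda>a b c d e. f c d (g a b e)) P Q R S U n"
    unfolding conv5_def
    by (rule sum.reindex_bij_witness[where i = "\<lambda>(a, b, c, d, e). ((c, d, a + b + e), (a, b, e))"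
          and j = "\<lambda>((i, j, k), (a, b, c)). (a, b, i, j, c)"]) (auto simp: compositions3_def compositions5_def)
  finally show "conv3 f R S (conv3 g P Q U) n = conv5 (\<lambda>a b c d e. f c d (g a b e)) P Q R S U n" .
qed

definition shift :: "(nat \<Rightarrow> 'v::zero) \<Rightarrow> nat \<Rightarrow> 'v" where
  "shift X = (\<lambda>n. case n of 0 \<Rightarrow> 0 | Suc m \<Rightarrow> X m)"

lemma shift_simps [simp]: "shift X 0 = 0" "shift X (Suc m) = X m"
  by (simp_all add: shift_def)

lemma shift_zero [simp]: "shift 0 = 0"
  by (simp add: fun_eq_iff shift_def split: nat.split)

lemma shift_add: "shift (X + Y :: nat \<Rightarrow> 'v::monoid_add) = shift X + shift Y"
  by (simp add: fun_eq_iff shift_def split: nat.split)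

lemma shift_diff: "shift (X - Y :: nat \<Rightarrow> 'v::group_add) = shift X - shift Y"
  by (simp add: fun_eq_iff shift_def split: nat.split)

lemma conv3_shift3:
  assumes "\<And>a b. f a b 0 = 0"
  shows "conv3 f P Q (shift X) = shift (conv3 f P Q X)"
proof
  fix n
  show "conv3 f P Q (shift X) n = shift (conv3 f P Q X) n"
  proof (cases n)
    case 0
    then show ?thesis by (simp add: conv3_def assms)
  next
    case (Suc m)
    have "(\<Sum>j\<le>Suc m - i. f (P i) (Q j) (shift X (Suc m - i - j)))
        = (\<Sum>j\<le>m - i. f (P i) (Q j) (X (m - i - j)))" if "i \<le> m" for i
    proof -
      have "(\<Sum>j\<le>Suc m - i. f (P i) (Q j) (shift X (Suc m - i - j)))
          = (\<Sum>j\<le>m - i. f (P i) (Q j) (shift X (Suc m - i - j)))"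
        using that by (simp add: Suc_diff_le assms)
      also have "\<dots> = (\<Sum>j\<le>m - i. f (P i) (Q j) (X (m - i - j)))"
        by (rule sum.cong) (use that in \<open>auto simp: Suc_diff_le\<close>)
      finally show ?thesis .
    qed
    then show ?thesis
      using Suc by (simp add: conv3_def assms)
  qed
qed

lemma conv3_shift1:
  assumes "\<And>b c. f 0 b c = 0"
  shows "conv3 f (shift X) Q R = shift (conv3 f X Q R)"
  using conv3_shift3[of "\<lambda>x y z. f z x y" Q R X] conv3_rotate[of "\<lambda>x y z. f z x y" Q R "shift X"]
    conv3_rotate[of "\<lambda>x y z. f z x y" Q R X]
  by (simp add: assms)

lemma conv3_shift2:
  assumes "\<And>a c. f a 0 c = 0"
  shows "conv3 f P (shift X) R = shift (conv3 f P X R)"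
  using conv3_shift1[of "\<lambda>x y z. f z x y" X R P] conv3_rotate[of "\<lambda>x y z. f z x y" "shift X" R P]
    conv3_rotate[of "\<lambda>x y z. f z x y" X R P]
  by (simp add: assms)

definition const_series :: "'v::zero \<Rightarrow> nat \<Rightarrow> 'v" where
  "const_series x = (\<lambda>n. if n = 0 then x else 0)"

lemma conv3_const_series:
  assumes "\<And>b c. f 0 b c = 0" "\<And>a c. f a 0 c = 0" "\<And>a b. f a b 0 = 0"
  shows "conv3 f (const_series x) (const_series y) (const_series z) n = (if n = 0 then f x y z else 0)"
  using assms by (auto simp: conv3_eq_sum_compositions3 const_series_def compositions3_def
      intro!: sum.neutral)

lemma conv5_const_series:
  assumes "\<And>b c d e. h 0 b c d e = 0" "\<And>a c d e. h a 0 c d e = 0" "\<And>a b d e. h a b 0 d e = 0"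
    "\<And>a b c e. h a b c 0 e = 0" "\<And>a b c d. h a b c d 0 = 0"
  shows "conv5 h (const_series x) (const_series y) (const_series z) (const_series v) (const_series w) n
    = (if n = 0 then h x y z v w else 0)"
proof -
  have "compositions5 0 = {(0, 0, 0, 0, 0)}"
    by (auto simp: compositions5_def)
  then show ?thesis
    using assms by (auto simp: conv5_def const_series_def compositions5_def intro!: sum.neutral)
qed

lemma lam_br_eq: "lam_br br psi P Q R = conv3 br P Q R + shift (conv3 psi P Q R)"
  by (simp add: fun_eq_iff lam_br_def shift_def split: nat.split)

lemma lam_br_nested:
  assumes "triadditive br" "triadditive psi"
  shows "lam_br br psi P Q (lam_br br psi R S U) =
      conv5 (\<lambda>a b c d e. br a b (br c d e)) P Q R S U
    + shift (conv5 (\<lambda>a b c d e. br a b (psi c d e)) P Q R S U + conv5 (\<lambda>a b c d e. psi a b (br c d e)) P Q R S U)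
    + shift (shift (conv5 (\<lambda>a b c d e. psi a b (psi c d e)) P Q R S U))"
  and "lam_br br psi (lam_br br psi P Q R) S U =
      conv5 (\<lambda>a b c d e. br (br a b c) d e) P Q R S U
    + shift (conv5 (\<lambda>a b c d e. br (psi a b c) d e) P Q R S U + conv5 (\<lambda>a b c d e. psi (br a b c) d e) P Q R S U)
    + shift (shift (conv5 (\<lambda>a b c d e. psi (psi a b c) d e) P Q R S U))"
  and "lam_br br psi R (lam_br br psi P Q S) U =
      conv5 (\<lambda>a b c d e. br c (br a b d) e) P Q R S U
    + shift (conv5 (\<lambda>a b c d e. br c (psi a b d) e) P Q R S U + conv5 (\<lambda>a b c d e. psi c (br a b d) e) P Q R S U)
    + shift (shift (conv5 (\<lambda>a b c d e. psi c (psi a b d) e) P Q R S U))"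
  and "lam_br br psi R S (lam_br br psi P Q U) =
      conv5 (\<lambda>a b c d e. br c d (br a b e)) P Q R S U
    + shift (conv5 (\<lambda>a b c d e. br c d (psi a b e)) P Q R S U + conv5 (\<lambda>a b c d e. psi c d (br a b e)) P Q R S U)
    + shift (shift (conv5 (\<lambda>a b c d e. psi c d (psi a b e)) P Q R S U))"
  \<comment> \<open>Both right-nesting rules match the first and last equation; the instances keep them apart.\<close>
  using assms
  by (simp_all add: lam_br_eq conv3_add conv3_shift1 conv3_shift2 conv3_shift3 shift_add
      conv3_conv3_left conv3_conv3_middle conv3_conv3_right[of _ P Q] conv3_conv3_right'[of _ R S] add_ac)

section \<open>Homogeneous elements and series\<close>

lemma hom_degree: "hom V0 V1 x i \<Longrightarrow> i = 0 \<or> i = 1"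
  by (auto simp: hom_def)

lemma graded_vs_vector_space: "graded_vs sm V0 V1 \<Longrightarrow> vector_space sm"
  by (simp add: graded_vs_def)

lemma hom_zero:
  assumes "graded_vs sm V0 V1" "i = 0 \<or> i = 1"
  shows "hom V0 V1 0 i"
  using assms by (auto simp: graded_vs_def lsubspace_def hom_def)

lemma hom_add:
  assumes "graded_vs sm V0 V1" "hom V0 V1 x i" "hom V0 V1 y i"
  shows "hom V0 V1 (x + y) i"
  using assms by (auto simp: graded_vs_def lsubspace_def hom_def)

lemma hom_sum:
  assumes "graded_vs sm V0 V1" "i = 0 \<or> i = 1" "\<And>x. x \<in> A \<Longrightarrow> hom V0 V1 (g x) i"
  shows "hom V0 V1 (sum g A) i"
  using assms(3)
  by (induct A rule: infinite_finite_induct) (simp_all add: hom_zero[OF assms(1,2)] hom_add[OF assms(1)])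

lemma hom_conv3:
  assumes "graded_vs sm V0 V1" "graded_map V0 V1 0 f"
    and "\<forall>n. hom V0 V1 (P n) i" "\<forall>n. hom V0 V1 (Q n) j" "\<forall>n. hom V0 V1 (R n) k"
  shows "hom V0 V1 (conv3 f P Q R n) ((i + j + k) mod 2)"
  unfolding conv3_def
  using assms(2-) by (intro hom_sum[OF assms(1)]) (auto simp: graded_map_def)

lemma hom_extV: "hom (extV V0) (extV V1) P i \<longleftrightarrow> (\<forall>n. hom V0 V1 (P n) i)"
  by (auto simp: hom_def extV_def)

lemma graded_map_lam_br:
  fixes sm :: "'k::field \<Rightarrow> 'v::ab_group_add \<Rightarrow> 'v"
  assumes "graded_vs sm V0 V1" "graded_map V0 V1 0 br" "graded_map V0 V1 0 psi"
  shows "graded_map (extV V0) (extV V1) 0 (lam_br br psi)"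
  unfolding graded_map_def hom_extV
proof (intro allI impI)
  fix P Q R :: "nat \<Rightarrow> 'v" and i j k n :: nat
  assume "\<forall>n. hom V0 V1 (P n) i" "\<forall>n. hom V0 V1 (Q n) j" "\<forall>n. hom V0 V1 (R n) k"
  with assms show "hom V0 V1 (lam_br br psi P Q R n) ((0 + i + j + k) mod 2)"
    by (auto simp: lam_br_def intro!: hom_add hom_zero hom_conv3)
qed

lemma hom_const_series:
  assumes "graded_vs sm V0 V1" "hom V0 V1 x i"
  shows "hom (extV V0) (extV V1) (const_series x) i"
  using assms hom_zero[OF assms(1) hom_degree[OF assms(2)]]
  by (simp add: hom_extV const_series_def)

section \<open>Defects of the defining identities\<close>

definition skew_defect :: "('k::field \<Rightarrow> 'v::ab_group_add \<Rightarrow> 'v) \<Rightarrow> 'k \<Rightarrow> ('v \<Rightarrow> 'v \<Rightarrow> 'v \<Rightarrow> 'v)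
    \<Rightarrow> 'v \<Rightarrow> nat \<Rightarrow> 'v \<Rightarrow> nat \<Rightarrow> 'v \<Rightarrow> 'v" where
  "skew_defect sm \<delta> f a i b j c = f b a c - sm (- \<delta> * sgn1 (i * j)) (f a b c)"

definition cyclic_sum :: "('k::field \<Rightarrow> 'v::ab_group_add \<Rightarrow> 'v) \<Rightarrow> ('v \<Rightarrow> 'v \<Rightarrow> 'v \<Rightarrow> 'v)
    \<Rightarrow> 'v \<Rightarrow> nat \<Rightarrow> 'v \<Rightarrow> nat \<Rightarrow> 'v \<Rightarrow> nat \<Rightarrow> 'v" where
  "cyclic_sum sm f a i b j c k =
     sm (sgn1 (i * k)) (f a b c) + sm (sgn1 (j * i)) (f b c a) + sm (sgn1 (k * j)) (f c a b)"

definition fundamental_defect :: "('k::field \<Rightarrow> 'v::ab_group_add \<Rightarrow> 'v) \<Rightarrow> 'k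
    \<Rightarrow> ('v \<Rightarrow> 'v \<Rightarrow> 'v \<Rightarrow> 'v) \<Rightarrow> ('v \<Rightarrow> 'v \<Rightarrow> 'v \<Rightarrow> 'v)
    \<Rightarrow> 'v \<Rightarrow> nat \<Rightarrow> 'v \<Rightarrow> nat \<Rightarrow> 'v \<Rightarrow> nat \<Rightarrow> 'v \<Rightarrow> nat \<Rightarrow> 'v \<Rightarrow> 'v" where
  "fundamental_defect sm \<delta> f g a i b j c k d l e =
     f a b (g c d e) - (f (g a b c) d e + sm (sgn1 (k * (i + j))) (f c (g a b d) e)
                        + sm (\<delta> * sgn1 ((i + j) * (k + l))) (f c d (g a b e)))"

lemma JLSTS_iff_defects:
  "JLSTS sm V0 V1 \<delta> f \<longleftrightarrow> (\<delta> = 1 \<or> \<delta> = -1) \<and> trilinear sm f \<and> graded_map V0 V1 0 f \<and>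
    (\<forall>a b c d e i j k l m.
       hom V0 V1 a i \<longrightarrow> hom V0 V1 b j \<longrightarrow> hom V0 V1 c k \<longrightarrow> hom V0 V1 d l \<longrightarrow> hom V0 V1 e m \<longrightarrow>
       skew_defect sm \<delta> f a i b j c = 0 \<and> cyclic_sum sm f a i b j c k = 0 \<and>
       fundamental_defect sm \<delta> f f a i b j c k d l e = 0)"
  by (simp add: JLSTS_def skew_defect_def cyclic_sum_def fundamental_defect_def)

lemma JLSTS_structure:
  assumes "JLSTS sm V0 V1 \<delta> f"
  shows "\<delta> = 1 \<or> \<delta> = -1" "trilinear sm f" "graded_map V0 V1 0 f"
  using assms by (simp_all add: JLSTS_def)

lemma JLSTS_skew:
  assumes "JLSTS sm V0 V1 \<delta> f" "hom V0 V1 a i" "hom V0 V1 b j" "hom V0 V1 c k"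
  shows "f b a c = sm (- \<delta> * sgn1 (i * j)) (f a b c)"
  using assms unfolding JLSTS_def by blast

lemma JLSTS_skew_defect:
  assumes "JLSTS sm V0 V1 \<delta> f" "hom V0 V1 a i" "hom V0 V1 b j" "hom V0 V1 c k"
  shows "skew_defect sm \<delta> f a i b j c = 0"
  using JLSTS_skew[OF assms] by (simp add: skew_defect_def)

lemma JLSTS_cyclic_sum:
  assumes "JLSTS sm V0 V1 \<delta> f" "hom V0 V1 a i" "hom V0 V1 b j" "hom V0 V1 c k"
  shows "cyclic_sum sm f a i b j c k = 0"
  using assms unfolding JLSTS_def cyclic_sum_def by blast

lemma JLSTS_fundamental_defect:
  assumes "JLSTS sm V0 V1 \<delta> f"
    and "hom V0 V1 a i" "hom V0 V1 b j" "hom V0 V1 c k" "hom V0 V1 d l" "hom V0 V1 e m"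
  shows "fundamental_defect sm \<delta> f f a i b j c k d l e = 0"
  using assms unfolding JLSTS_def fundamental_defect_def by (metis right_minus_eq)

lemma trilinear_imp_triadditive:
  "trilinear sm f \<Longrightarrow> triadditive f"
  by (simp add: trilinear_def triadditive_def additive_def Vector_Spaces.linear_iff)

section \<open>The deformed product\<close>

context vector_space
begin

lemma vector_space_ext_sm: "vector_space (ext_sm scale)"
  by (auto simp: vector_space_def ext_sm_def fun_eq_iff scale_right_distrib scale_left_distrib)

lemma ext_sm_add: "ext_sm scale c (X + Y) = ext_sm scale c X + ext_sm scale c Y"
  by (simp add: fun_eq_iff ext_sm_def scale_right_distrib)

lemma shift_ext_sm: "shift (ext_sm scale c X) = ext_sm scale c (shift X)"
  by (simp add: fun_eq_iff ext_sm_def shift_def split: nat.split)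

lemma conv3_scale_kernel:
  "conv3 (\<lambda>x y z. scale c (f x y z)) P Q R = ext_sm scale c (conv3 f P Q R)"
  by (simp add: fun_eq_iff conv3_def ext_sm_def scale_sum_right)

lemma conv5_scale_kernel:
  "conv5 (\<lambda>a b c' d e. scale c (h a b c' d e)) P Q R S U = ext_sm scale c (conv5 h P Q R S U)"
  by (simp add: fun_eq_iff conv5_def ext_sm_def scale_sum_right case_prod_beta)

lemma trilinearD:
  assumes "trilinear scale f"
  shows "f (scale c a) b d = scale c (f a b d)" "f a (scale c b) d = scale c (f a b d)"
    "f a b (scale c d) = scale c (f a b d)"
  using assms by (simp_all add: trilinear_def Vector_Spaces.linear_iff)

lemma conv3_scale:
  assumes "trilinear scale f"
  shows "conv3 f (ext_sm scale c A) Q R = ext_sm scale c (conv3 f A Q R)"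
    "conv3 f P (ext_sm scale c A) R = ext_sm scale c (conv3 f P A R)"
    "conv3 f P Q (ext_sm scale c A) = ext_sm scale c (conv3 f P Q A)"
  by (simp_all add: conv3_def ext_sm_def fun_eq_iff scale_sum_right trilinearD[OF assms])

lemma trilinear_lam_br:
  assumes "trilinear scale br" "trilinear scale psi"
  shows "trilinear (ext_sm scale) (lam_br br psi)"
proof -
  note additive = conv3_add[OF trilinear_imp_triadditive[OF assms(1)]]
    conv3_add[OF trilinear_imp_triadditive[OF assms(2)]]
  note homogeneous = conv3_scale[OF assms(1)] conv3_scale[OF assms(2)]
  show ?thesis
    using vector_space_ext_sm
    by (simp add: trilinear_def Vector_Spaces.linear_iff lam_br_eq additive homogeneous
        shift_add shift_ext_sm ext_sm_add add_ac)
qed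

lemma skew_defect_lam_br:
  "skew_defect (ext_sm scale) \<delta> (lam_br br psi) P i Q j R =
     conv3 (\<lambda>a b c. skew_defect scale \<delta> br a i b j c) P Q R
   + shift (conv3 (\<lambda>a b c. skew_defect scale \<delta> psi a i b j c) P Q R)"
  unfolding skew_defect_def lam_br_eq conv3_swap12[of _ Q P R] conv3_diff_kernel conv3_scale_kernel
  by (simp add: ext_sm_add shift_diff shift_ext_sm)

lemma cyclic_sum_lam_br:
  "cyclic_sum (ext_sm scale) (lam_br br psi) P i Q j R k =
     conv3 (\<lambda>a b c. cyclic_sum scale br a i b j c k) P Q R
   + shift (conv3 (\<lambda>a b c. cyclic_sum scale psi a i b j c k) P Q R)"
  unfolding cyclic_sum_def lam_br_eq conv3_rotate[of _ Q R P] conv3_rotate[of _ R P Q]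
    conv3_add_kernel conv3_scale_kernel
  by (simp add: ext_sm_add shift_add shift_ext_sm add_ac)

lemma conv5_fundamental_defect:
  "conv5 (\<lambda>a b c d e. fundamental_defect scale \<delta> f g a i b j c k d l e) P Q R S U =
     conv5 (\<lambda>a b c d e. f a b (g c d e)) P Q R S U
   - (conv5 (\<lambda>a b c d e. f (g a b c) d e) P Q R S U
      + ext_sm scale (sgn1 (k * (i + j))) (conv5 (\<lambda>a b c d e. f c (g a b d) e) P Q R S U)
      + ext_sm scale (\<delta> * sgn1 ((i + j) * (k + l))) (conv5 (\<lambda>a b c d e. f c d (g a b e)) P Q R S U))"
  by (simp add: fundamental_defect_def conv5_diff_kernel conv5_add_kernel conv5_scale_kernel)

lemma fundamental_defect_lam_br:
  assumes "triadditive br" "triadditive psi"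
  shows "fundamental_defect (ext_sm scale) \<delta> (lam_br br psi) (lam_br br psi) P i Q j R k S l U =
     conv5 (\<lambda>a b c d e. fundamental_defect scale \<delta> br br a i b j c k d l e) P Q R S U
   + shift (conv5 (\<lambda>a b c d e. fundamental_defect scale \<delta> br psi a i b j c k d l e) P Q R S U
          + conv5 (\<lambda>a b c d e. fundamental_defect scale \<delta> psi br a i b j c k d l e) P Q R S U)
   + shift (shift (conv5 (\<lambda>a b c d e. fundamental_defect scale \<delta> psi psi a i b j c k d l e) P Q R S U))"
  unfolding conv5_fundamental_defect
  by (simp add: fundamental_defect_def lam_br_nested[OF assms, where P = P and Q = Q and R = R and S = S
      and U = U] ext_sm_add shift_add shift_diff shift_ext_sm algebra_simps)

lemma d3_eq_fundamental_defects:
  assumes br: "JLSTS scale V0 V1 \<delta> br" and psi: "graded_map V0 V1 0 psi"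
    and h: "hom V0 V1 x1 n1" "hom V0 V1 x2 n2" "hom V0 V1 x3 n3" "hom V0 V1 x4 n4" "hom V0 V1 x5 n5"
  shows "d3 scale \<delta> br psi 0 x1 n1 x2 n2 x3 n3 x4 n4 x5 n5 =
    - (fundamental_defect scale \<delta> br psi x1 n1 x2 n2 x3 n3 x4 n4 x5
       + fundamental_defect scale \<delta> psi br x1 n1 x2 n2 x3 n3 x4 n4 x5)"
proof -
  \<comment> \<open>The \<theta>-term of d^3 \<psi> carrying \<psi>(x1,x2,x4) in the first slot of the product becomes,
    by skew-symmetry of the product, the term [x3, \<psi>(x1,x2,x4), x5] of the mixed defects.\<close>
  have "hom V0 V1 (psi x1 x2 x4) ((n1 + n2 + n4) mod 2)"
    using psi h unfolding graded_map_def by fastforce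
  from JLSTS_skew[OF br h(3) this h(5)]
  have skew: "br (psi x1 x2 x4) x3 x5
      = scale (- \<delta> * sgn1 (n3 * ((n1 + n2 + n4) mod 2))) (br x3 (psi x1 x2 x4) x5)" .
  with JLSTS_structure(1)[OF br] hom_degree[OF h(1)] hom_degree[OF h(2)] hom_degree[OF h(3)]
    hom_degree[OF h(4)] hom_degree[OF h(5)]
  show ?thesis
    by (elim disjE)
       (simp_all add: d3_def theta_def Dop_def fundamental_defect_def skew sgn1_def algebra_simps)
qed

lemma cocycle3_iff_fundamental_defects:
  assumes "JLSTS scale V0 V1 \<delta> br" "graded_map V0 V1 0 psi"
  shows "cocycle3 scale V0 V1 \<delta> br psi 0 \<longleftrightarrow> (\<forall>x1 n1 x2 n2 x3 n3 x4 n4 x5 n5.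
     hom V0 V1 x1 n1 \<longrightarrow> hom V0 V1 x2 n2 \<longrightarrow> hom V0 V1 x3 n3 \<longrightarrow> hom V0 V1 x4 n4 \<longrightarrow> hom V0 V1 x5 n5 \<longrightarrow>
     fundamental_defect scale \<delta> br psi x1 n1 x2 n2 x3 n3 x4 n4 x5
     + fundamental_defect scale \<delta> psi br x1 n1 x2 n2 x3 n3 x4 n4 x5 = 0)"
  unfolding cocycle3_def by (simp add: d3_eq_fundamental_defects[OF assms] del: minus_add_distrib)

lemma lam_br_JLSTS_imp_defects:
  assumes gvs: "graded_vs scale V0 V1" and br: "triadditive br" and psi: "triadditive psi"
    and L: "JLSTS (ext_sm scale) (extV V0) (extV V1) \<delta> (lam_br br psi)"
    and h: "hom V0 V1 a i" "hom V0 V1 b j" "hom V0 V1 c k" "hom V0 V1 d l" "hom V0 V1 e m"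
  shows "skew_defect scale \<delta> psi a i b j c = 0" "cyclic_sum scale psi a i b j c k = 0"
    "fundamental_defect scale \<delta> psi psi a i b j c k d l e = 0"
    "fundamental_defect scale \<delta> br psi a i b j c k d l e
     + fundamental_defect scale \<delta> psi br a i b j c k d l e = 0"
proof -
  note series = L[unfolded JLSTS_iff_defects, THEN conjunct2, THEN conjunct2, THEN conjunct2, rule_format,
      OF hom_const_series[OF gvs h(1)] hom_const_series[OF gvs h(2)] hom_const_series[OF gvs h(3)]
      hom_const_series[OF gvs h(4)] hom_const_series[OF gvs h(5)]]
  note expand = skew_defect_lam_br cyclic_sum_lam_br fundamental_defect_lam_br[OF br psi]
  note evaluate = conv3_const_series conv5_const_series skew_defect_def cyclic_sum_def
    fundamental_defect_def triadditive_zero[OF br] triadditive_zero[OF psi]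
  show "skew_defect scale \<delta> psi a i b j c = 0"
    using fun_cong[OF series[THEN conjunct1], of 1] unfolding expand by (simp add: evaluate)
  show "cyclic_sum scale psi a i b j c k = 0"
    using fun_cong[OF series[THEN conjunct2, THEN conjunct1], of 1] unfolding expand
    by (simp add: evaluate)
  show "fundamental_defect scale \<delta> psi psi a i b j c k d l e = 0"
    using fun_cong[OF series[THEN conjunct2, THEN conjunct2], of 2] unfolding expand
    by (simp add: evaluate numeral_2_eq_2)
  show "fundamental_defect scale \<delta> br psi a i b j c k d l e
     + fundamental_defect scale \<delta> psi br a i b j c k d l e = 0"
    using fun_cong[OF series[THEN conjunct2, THEN conjunct2], of 1] unfolding expand
    by (simp add: evaluate)
qed

lemma lam_br_defects_vanish:
  assumes br: "JLSTS scale V0 V1 \<delta> br" and psi: "JLSTS scale V0 V1 \<delta> psi"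
    and cocycle: "cocycle3 scale V0 V1 \<delta> br psi 0"
    and h: "\<forall>n. hom V0 V1 (P n) i" "\<forall>n. hom V0 V1 (Q n) j" "\<forall>n. hom V0 V1 (R n) k"
      "\<forall>n. hom V0 V1 (S n) l" "\<forall>n. hom V0 V1 (U n) m"
  shows "skew_defect (ext_sm scale) \<delta> (lam_br br psi) P i Q j R = 0"
    "cyclic_sum (ext_sm scale) (lam_br br psi) P i Q j R k = 0"
    "fundamental_defect (ext_sm scale) \<delta> (lam_br br psi) (lam_br br psi) P i Q j R k S l U = 0"
proof -
  have tri: "triadditive br" "triadditive psi"
    using JLSTS_structure(2)[OF br] JLSTS_structure(2)[OF psi] by (simp_all add: trilinear_imp_triadditive)
  have skew: "conv3 (\<lambda>a b c. skew_defect scale \<delta> f a i b j c) P Q R = 0"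
    and cyclic: "conv3 (\<lambda>a b c. cyclic_sum scale f a i b j c k) P Q R = 0"
    and fundamental: "conv5 (\<lambda>a b c d e. fundamental_defect scale \<delta> f f a i b j c k d l e) P Q R S U = 0"
    if "JLSTS scale V0 V1 \<delta> f" for f
    using h by (auto intro!: conv3_eq_0 conv5_eq_0 JLSTS_skew_defect[OF that] JLSTS_cyclic_sum[OF that]
        JLSTS_fundamental_defect[OF that])
  have "fundamental_defect scale \<delta> br psi a i b j c k d l e
      + fundamental_defect scale \<delta> psi br a i b j c k d l e = 0"
    if "hom V0 V1 a i" "hom V0 V1 b j" "hom V0 V1 c k" "hom V0 V1 d l" "hom V0 V1 e m" for a b c d e
    using cocycle that unfolding cocycle3_iff_fundamental_defects[OF br JLSTS_structure(3)[OF psi]]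
    by blast
  then have mixed: "conv5 (\<lambda>a b c d e. fundamental_defect scale \<delta> br psi a i b j c k d l e) P Q R S U
      + conv5 (\<lambda>a b c d e. fundamental_defect scale \<delta> psi br a i b j c k d l e) P Q R S U = 0"
    unfolding conv5_add_kernel[symmetric] using h by (intro conv5_eq_0) blast
  show "skew_defect (ext_sm scale) \<delta> (lam_br br psi) P i Q j R = 0"
    by (simp add: skew_defect_lam_br skew[OF br] skew[OF psi])
  show "cyclic_sum (ext_sm scale) (lam_br br psi) P i Q j R k = 0"
    by (simp add: cyclic_sum_lam_br cyclic[OF br] cyclic[OF psi])
  show "fundamental_defect (ext_sm scale) \<delta> (lam_br br psi) (lam_br br psi) P i Q j R k S l U = 0"
    by (simp add: fundamental_defect_lam_br[OF tri] fundamental[OF br] fundamental[OF psi] mixed)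
qed

end

theorem theorem5p1:
  fixes sm :: "'k::field \<Rightarrow> 'v::ab_group_add \<Rightarrow> 'v"
    and V0 V1 :: "'v set" and \<delta> :: 'k
    and br psi :: "'v \<Rightarrow> 'v \<Rightarrow> 'v \<Rightarrow> 'v"
  assumes "graded_vs sm V0 V1"
    and "JLSTS sm V0 V1 \<delta> br"
    and "trilinear sm psi" and "graded_map V0 V1 0 psi"
  shows "JLSTS (ext_sm sm) (extV V0) (extV V1) \<delta> (lam_br br psi)
         \<longleftrightarrow> JLSTS sm V0 V1 \<delta> psi \<and> cocycle3 sm V0 V1 \<delta> br psi 0"
proof -
  interpret vector_space sm
    using assms(1) by (rule graded_vs_vector_space)
  note br = JLSTS_structure[OF assms(2)]
  have tri: "triadditive br" "triadditive psi"
    using br(2) assms(3) by (simp_all add: trilinear_imp_triadditive)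
  show ?thesis
  proof
    assume "JLSTS (ext_sm sm) (extV V0) (extV V1) \<delta> (lam_br br psi)"
    note psi_defects = lam_br_JLSTS_imp_defects[OF assms(1) tri this]
    have "JLSTS sm V0 V1 \<delta> psi"
      unfolding JLSTS_iff_defects
      by (intro conjI allI impI) (rule br(1) assms(3,4) psi_defects; assumption)+
    moreover have "cocycle3 sm V0 V1 \<delta> br psi 0"
      unfolding cocycle3_iff_fundamental_defects[OF assms(2,4)]
      by (intro allI impI) (rule psi_defects; assumption)
    ultimately show "JLSTS sm V0 V1 \<delta> psi \<and> cocycle3 sm V0 V1 \<delta> br psi 0" ..
  next
    assume "JLSTS sm V0 V1 \<delta> psi \<and> cocycle3 sm V0 V1 \<delta> br psi 0"
    note series_defects = lam_br_defects_vanish[OF assms(2) this[THEN conjunct1] this[THEN conjunct2]]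
    show "JLSTS (ext_sm sm) (extV V0) (extV V1) \<delta> (lam_br br psi)"
      unfolding JLSTS_iff_defects[of "ext_sm sm"] hom_extV
      by (intro conjI allI impI)
         (rule br(1) trilinear_lam_br[OF br(2) assms(3)] graded_map_lam_br[OF assms(1) br(3) assms(4)]
           series_defects; assumption)+
  qed
qed

end
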